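(* Let $p$ be a prime, $k>0$ an integer, and $G_{p,k}=C_{p^\infty}\times C_k\times\mathbf{T}$. For a finite subgroup $F$ of $C_k\times\mathbf{T}$ and a homomorphism $f:C_{p^\infty}\to(C_k\times\mathbf{T})/F$, set $H_{F,f}:=q_F^{-1}(\mathrm{Graph}(f))$. Then $H_{F,f}$ is an infinite discrete subgroup of $G_{p,k}$, and every infinite discrete subgroup of $G_{p,k}$ is of the form $H_{F,f}$ for some such $F$ and $f$.
   Context: $\mathbf{T}$ is the circle group; $C_m\subset\mathbf{T}$ is the group of $m$-th roots of unity; $C_{p^\infty}=\bigcup_{\ell\ge1}C_{p^\ell}$ is the Prüfer $p$-group, with the discrete topology. $q_F:G_{p,k}\to G_{p,k}/(\{1\}\times F)=C_{p^\infty}\times(C_k\times\mathbf{T})/F$ is the quotient map, and $\mathrm{Graph}(f)=\{(w,f(w)):w\in C_{p^\infty}\}$. *)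

theory Defs
  imports "HOL-Analysis.Analysis" "HOL-Algebra.Algebra"
begin

text \<open>All groups are realised as subgroups of the multiplicative group of complex numbers
  (or products thereof), with componentwise multiplication.\<close>

definition circle_grp :: "complex monoid" where
  "circle_grp = \<lparr>carrier = sphere 0 1, mult = (*), one = 1\<rparr>"

definition roots_grp :: "nat \<Rightarrow> complex monoid" where
  "roots_grp m = \<lparr>carrier = {z. z ^ m = 1}, mult = (*), one = 1\<rparr>"

definition pruefer_grp :: "nat \<Rightarrow> complex monoid" where
  "pruefer_grp p = \<lparr>carrier = (\<Union>l\<in>{1..}. {z. z ^ (p ^ l) = 1}), mult = (*), one = 1\<rparr>"

definition K_grp :: "nat \<Rightarrow> (complex \<times> complex) monoid" where
  "K_grp k = roots_grp k \<times>\<times> circle_grp"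

definition G_grp :: "nat \<Rightarrow> nat \<Rightarrow> (complex \<times> complex \<times> complex) monoid" where
  "G_grp p k = pruefer_grp p \<times>\<times> K_grp k"

definition G_top :: "nat \<Rightarrow> nat \<Rightarrow> (complex \<times> complex \<times> complex) topology" where
  "G_top p k = prod_topology (discrete_topology (carrier (pruefer_grp p)))
      (prod_topology (discrete_topology (carrier (roots_grp k)))
                     (subtopology euclidean (sphere 0 1)))"

definition discrete_subgroup :: "nat \<Rightarrow> nat \<Rightarrow> (complex \<times> complex \<times> complex) set \<Rightarrow> bool" where
  "discrete_subgroup p k H \<longleftrightarrow>
     subgroup H (G_grp p k) \<and> subtopology (G_top p k) H = discrete_topology H"

text \<open>H_(F,f) = q_F^{-1}(Graph f), where q_F(w,x) = (w, F x) and f takes values in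
  the quotient group (C_k \<times> T)/F = K_grp k Mod F (cosets).\<close>
definition H_Ff :: "nat \<Rightarrow> nat \<Rightarrow> (complex \<times> complex) set \<Rightarrow> (complex \<Rightarrow> (complex \<times> complex) set)
    \<Rightarrow> (complex \<times> complex \<times> complex) set" where
  "H_Ff p k F f = {(w, x). w \<in> carrier (pruefer_grp p) \<and> x \<in> carrier (K_grp k)
                          \<and> F #>\<^bsub>K_grp k\<^esub> x = f w}"

end

theory Submission
  imports Defs
begin

(* Write K = C_k \<times> T. A subgroup H of C_{p^\<infinity>} \<times> K whose projection to C_{p^\<infinity>} is onto is
  q_F^{-1}(Graph f) for F the fibre of H over 1 and f mapping w to the fibre over w, which is an
  F-coset; conversely every q_F^{-1}(Graph f) is such a subgroup. Since C_{p^\<infinity>} and C_k are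
  discrete, H is discrete iff each of its points is isolated within its circle slice.
  If F is finite, all fibres are finite, so H is discrete; it is infinite as it projects onto
  C_{p^\<infinity>}. If H is discrete, isolation of the identity makes the points of F in a slice
  {c} \<times> T uniformly separated, so F is finite. Then the fibres are finite, so an infinite H has
  an infinite projection, and an infinite subgroup of C_{p^\<infinity>} is everything: it contains
  elements of arbitrarily large order p^n, each generating all of C_{p^n}. *)

lemma comm_group_complex_mult:
  fixes S :: "complex set"
  assumes "1 \<in> S" and "\<And>x y. x \<in> S \<Longrightarrow> y \<in> S \<Longrightarrow> x * y \<in> S"
    and "\<And>x. x \<in> S \<Longrightarrow> x \<noteq> 0" and "\<And>x. x \<in> S \<Longrightarrow> inverse x \<in> S"
  shows "comm_group \<lparr>carrier = S, mult = (*), one = 1\<rparr>" (is "comm_group ?G")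
proof (rule comm_groupI)
  show "\<exists>y\<in>carrier ?G. y \<otimes>\<^bsub>?G\<^esub> x = \<one>\<^bsub>?G\<^esub>" if "x \<in> carrier ?G" for x
    using that assms by (intro bexI[of _ "inverse x"]) auto
qed (use assms in \<open>auto simp: mult.assoc mult.commute\<close>)

lemma pruefer_grp_simps [simp]:
  "carrier (pruefer_grp p) = (\<Union>l\<in>{1..}. {z. z ^ (p ^ l) = 1})"
  "x \<otimes>\<^bsub>pruefer_grp p\<^esub> y = x * y"
  "\<one>\<^bsub>pruefer_grp p\<^esub> = 1"
  by (simp_all add: pruefer_grp_def)

lemma pruefer_grp_nat_pow [simp]: "x [^]\<^bsub>pruefer_grp p\<^esub> (n::nat) = x ^ n"
  by (induction n) simp_all

lemma K_grp_simps [simp]: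
  "carrier (K_grp k) = {z. z ^ k = 1} \<times> sphere 0 1"
  "(a, b) \<otimes>\<^bsub>K_grp k\<^esub> (c, d) = (a * c, b * d)"
  "\<one>\<^bsub>K_grp k\<^esub> = (1, 1)"
  by (simp_all add: K_grp_def roots_grp_def circle_grp_def)

lemma comm_group_pruefer_grp:
  assumes "p > 0"
  shows "comm_group (pruefer_grp p)"
  unfolding pruefer_grp_def
proof (rule comm_group_complex_mult)
  fix x y :: complex
  assume "x \<in> (\<Union>l\<in>{1..}. {z. z ^ (p ^ l) = 1})" "y \<in> (\<Union>l\<in>{1..}. {z. z ^ (p ^ l) = 1})"
  then obtain l m where l: "l \<ge> 1" "x ^ (p ^ l) = 1" and m: "y ^ (p ^ m) = 1" by auto
  show "x \<noteq> 0" using l assms by (auto simp: power_0_left)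
  show "inverse x \<in> (\<Union>l\<in>{1..}. {z. z ^ (p ^ l) = 1})"
    using l by (auto simp: power_inverse)
  have "x ^ (p ^ (l + m)) = 1" using l by (simp add: power_add power_mult)
  moreover have "y ^ (p ^ (l + m)) = 1" using m by (metis power_add mult.commute power_mult power_one)
  ultimately have "(x * y) ^ (p ^ (l + m)) = 1" by (simp add: power_mult_distrib)
  then show "x * y \<in> (\<Union>l\<in>{1..}. {z. z ^ (p ^ l) = 1})"
    using l m by (auto intro!: bexI[of _ "l + m"])
qed auto

lemma comm_group_K_grp:
  assumes "k > 0"
  shows "comm_group (K_grp k)"
proof -
  have "comm_group (roots_grp k)"
    unfolding roots_grp_def
    by (rule comm_group_complex_mult)
      (use assms in \<open>auto simp: power_mult_distrib power_inverse power_0_left\<close>)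
  moreover have "comm_group circle_grp"
    unfolding circle_grp_def by (rule comm_group_complex_mult) (auto simp: norm_mult norm_inverse)
  ultimately interpret R: comm_group "roots_grp k" + C: comm_group circle_grp .
  interpret group "K_grp k"
    unfolding K_grp_def by (rule DirProd_group) unfold_locales
  show ?thesis
    by (rule group_comm_groupI) (auto simp: K_grp_def R.m_comm C.m_comm)
qed

lemma K_grp_inv:
  assumes "k > 0" and "(a, b) \<in> carrier (K_grp k)"
  shows "inv\<^bsub>K_grp k\<^esub> (a, b) = (inverse a, inverse b)"
proof -
  interpret comm_group "K_grp k" using comm_group_K_grp assms(1) .
  have "a \<noteq> 0" "b \<noteq> 0" using assms by (auto simp: power_0_left)
  then show ?thesis
    using assms by (intro inv_equality) (auto simp: power_inverse norm_inverse)
qed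

lemma roots_unity_eq_powers:
  fixes q :: complex
  assumes "n > 0" and "q ^ n = 1" and "inj_on (\<lambda>i. q ^ i) {..<n}"
  shows "{z. z ^ n = 1} = (\<lambda>i. q ^ i) ` {..<n}"
proof (rule card_subset_eq[symmetric])
  show "finite {z::complex. z ^ n = 1}" using assms(1) by (intro finite_roots_unity) simp
  show "(\<lambda>i. q ^ i) ` {..<n} \<subseteq> {z. z ^ n = 1}"
    using assms(2) by (auto simp flip: power_mult) (metis mult.commute power_mult power_one)
  show "card ((\<lambda>i. q ^ i) ` {..<n}) = card {z::complex. z ^ n = 1}"
    using assms by (simp add: card_image card_roots_unity_eq)
qed

lemma infinite_pruefer_grp:
  assumes "Factorial_Ring.prime p"
  shows "infinite (carrier (pruefer_grp p))"
proof
  assume fin: "finite (carrier (pruefer_grp p))"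
  define l where "l = Suc (card (carrier (pruefer_grp p)))"
  have "p \<ge> 2" using assms prime_ge_2_nat by blast
  have "l < 2 ^ l" by (rule less_exp)
  also have "\<dots> \<le> p ^ l" using \<open>p \<ge> 2\<close> by (simp add: power_mono)
  also have "\<dots> = card {z::complex. z ^ (p ^ l) = 1}"
    using \<open>p \<ge> 2\<close> by (simp add: card_roots_unity_eq)
  also have "\<dots> \<le> card (carrier (pruefer_grp p))"
    using fin by (intro card_mono) (auto simp: l_def)
  finally show False by (simp add: l_def)
qed

lemma pruefer_infinite_subgroup_eq_carrier:
  assumes p: "Factorial_Ring.prime p" and Q: "subgroup Q (pruefer_grp p)" "infinite Q"
  shows "Q = carrier (pruefer_grp p)"
proof
  interpret P: comm_group "pruefer_grp p"
    using comm_group_pruefer_grp p prime_gt_0_nat by blast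
  show "Q \<subseteq> carrier (pruefer_grp p)" using Q(1) subgroup.subset by blast
  show "carrier (pruefer_grp p) \<subseteq> Q"
  proof
    fix z assume "z \<in> carrier (pruefer_grp p)"
    then obtain l where l: "z ^ (p ^ l) = 1" by auto
    have "finite {z::complex. z ^ (p ^ l) = 1}"
      using p prime_gt_0_nat by (intro finite_roots_unity) (simp add: Suc_leI)
    then have "\<not> Q \<subseteq> {z. z ^ (p ^ l) = 1}" using Q(2) finite_subset by blast
    then obtain q where q: "q \<in> Q" "q ^ (p ^ l) \<noteq> 1" by auto
    then have qP: "q \<in> carrier (pruefer_grp p)" using Q(1) subgroup.subset by blast
    then obtain m where "q ^ (p ^ m) = 1" by auto
    then have "P.ord q dvd p ^ m" using P.pow_eq_id[OF qP] by simp
    then obtain n where n: "P.ord q = p ^ n" using divides_primepow_nat p by blast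
    have "\<not> p ^ n dvd p ^ l" using q(2) P.pow_eq_id[OF qP] n by simp
    then have "l \<le> n" using le_imp_power_dvd[of n l p] by linarith
    then obtain c where "p ^ n = p ^ l * c" using le_imp_power_dvd[of l n p] unfolding dvd_def by blast
    then have "z ^ (p ^ n) = 1" using l by (simp add: power_mult)
    moreover have "{z. z ^ (p ^ n) = 1} = (\<lambda>i. q ^ i) ` {..<p ^ n}"
    proof (rule roots_unity_eq_powers)
      show "p ^ n > 0" using p prime_gt_0_nat by simp
      then have "P.ord q > 0" using n by simp
      then have "{0..P.ord q - 1} = {..<P.ord q}" by auto
      then show "inj_on (\<lambda>i. q ^ i) {..<p ^ n}" using P.ord_inj[OF qP] n by simp
      show "q ^ p ^ n = 1" using P.pow_ord_eq_1[OF qP] n by simp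
    qed
    ultimately obtain i where "z = q ^ i" by blast
    then show "z \<in> Q"
      using P.subgroup_int_pow_closed[OF Q(1) q(1), of "int i"] by (simp add: int_pow_int)
  qed
qed

definition coset_graph ::
    "('a, 'c) monoid_scheme \<Rightarrow> ('b, 'd) monoid_scheme \<Rightarrow> 'b set \<Rightarrow> ('a \<Rightarrow> 'b set) \<Rightarrow> ('a \<times> 'b) set"
  where "coset_graph A B F f = {(w, x). w \<in> carrier A \<and> x \<in> carrier B \<and> F #>\<^bsub>B\<^esub> x = f w}"

lemma subgroup_coset_graph:
  assumes "group A" and "F \<lhd> B" and "f \<in> hom A (B Mod F)"
  shows "subgroup (coset_graph A B F f) (A \<times>\<times> B)"
proof -
  interpret A: group A by fact
  interpret N: normal F B by fact
  interpret f: group_hom A "B Mod F" f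
    using assms N.factorgroup_is_group by (simp add: group_hom_def group_hom_axioms_def)
  interpret AB: group "A \<times>\<times> B" using A.group_axioms N.is_group by (rule DirProd_group)
  show ?thesis
  proof (rule AB.subgroupI)
    show "coset_graph A B F f \<subseteq> carrier (A \<times>\<times> B)" by (auto simp: coset_graph_def)
    have "F #>\<^bsub>B\<^esub> \<one>\<^bsub>B\<^esub> = f \<one>\<^bsub>A\<^esub>" using N.subset by simp
    then have "(\<one>\<^bsub>A\<^esub>, \<one>\<^bsub>B\<^esub>) \<in> coset_graph A B F f" by (simp add: coset_graph_def)
    then show "coset_graph A B F f \<noteq> {}" by blast
  next
    fix h assume "h \<in> coset_graph A B F f"
    then obtain w x where h: "h = (w, x)" "w \<in> carrier A" "x \<in> carrier B" "F #>\<^bsub>B\<^esub> x = f w"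
      by (auto simp: coset_graph_def)
    have "f (inv\<^bsub>A\<^esub> w) = set_inv\<^bsub>B\<^esub> (F #>\<^bsub>B\<^esub> x)"
      using h f.hom_inv N.inv_FactGroup f.hom_closed by metis
    also have "\<dots> = F #>\<^bsub>B\<^esub> inv\<^bsub>B\<^esub> x" using N.rcos_inv h(3) .
    finally show "inv\<^bsub>A \<times>\<times> B\<^esub> h \<in> coset_graph A B F f"
      using h A.group_axioms N.is_group by (simp add: coset_graph_def)
  next
    fix h h' assume "h \<in> coset_graph A B F f" "h' \<in> coset_graph A B F f"
    then obtain w x w' x' where h: "h = (w, x)" "w \<in> carrier A" "x \<in> carrier B" "F #>\<^bsub>B\<^esub> x = f w"
      and h': "h' = (w', x')" "w' \<in> carrier A" "x' \<in> carrier B" "F #>\<^bsub>B\<^esub> x' = f w'"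
      by (auto simp: coset_graph_def)
    have "f (w \<otimes>\<^bsub>A\<^esub> w') = (F #>\<^bsub>B\<^esub> x) <#>\<^bsub>B\<^esub> (F #>\<^bsub>B\<^esub> x')"
      using h h' by simp
    also have "\<dots> = F #>\<^bsub>B\<^esub> (x \<otimes>\<^bsub>B\<^esub> x')" using N.rcos_sum h(3) h'(3) .
    finally show "h \<otimes>\<^bsub>A \<times>\<times> B\<^esub> h' \<in> coset_graph A B F f"
      using h h' by (simp add: coset_graph_def)
  qed
qed

lemma fst_image_coset_graph:
  assumes "f \<in> hom A (B Mod F)"
  shows "fst ` coset_graph A B F f = carrier A"
proof
  show "fst ` coset_graph A B F f \<subseteq> carrier A" by (auto simp: coset_graph_def)
  show "carrier A \<subseteq> fst ` coset_graph A B F f"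
  proof
    fix w assume "w \<in> carrier A"
    then have "f w \<in> carrier (B Mod F)" using assms by (simp add: hom_def Pi_iff)
    then obtain x where "x \<in> carrier B" "F #>\<^bsub>B\<^esub> x = f w" by (auto simp: carrier_FactGroup)
    then show "w \<in> fst ` coset_graph A B F f"
      using \<open>w \<in> carrier A\<close> by (force simp: coset_graph_def)
  qed
qed

lemma coset_graph_Image:
  assumes "group B" and "subgroup F B" and "(w, x) \<in> coset_graph A B F f"
  shows "coset_graph A B F f `` {w} = F #>\<^bsub>B\<^esub> x"
proof -
  interpret B: group B by fact
  have x: "x \<in> carrier B" "F #>\<^bsub>B\<^esub> x = f w" using assms(3) by (auto simp: coset_graph_def)
  have "y \<in> carrier B \<and> F #>\<^bsub>B\<^esub> y = F #>\<^bsub>B\<^esub> x \<longleftrightarrow> y \<in> F #>\<^bsub>B\<^esub> x" for y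
    using assms(2) x(1) B.repr_independence B.repr_independenceD
      subgroup.elemrcos_carrier[OF assms(2) B.is_group x(1)] by metis
  then show ?thesis using assms(3) x by (auto simp: coset_graph_def)
qed

lemma subgroup_DirProd_Image_one:
  assumes "group A" and "group B" and "subgroup H (A \<times>\<times> B)"
  shows "subgroup (H `` {\<one>\<^bsub>A\<^esub>}) B"
proof -
  interpret A: group A by fact
  interpret B: group B by fact
  interpret H: subgroup H "A \<times>\<times> B" by fact
  have carrier: "y \<in> carrier B" if "(\<one>\<^bsub>A\<^esub>, y) \<in> H" for y
    using that H.subset by auto
  show ?thesis
  proof (rule B.subgroupI)
    show "H `` {\<one>\<^bsub>A\<^esub>} \<subseteq> carrier B" using carrier by blast
    show "H `` {\<one>\<^bsub>A\<^esub>} \<noteq> {}" using H.one_closed by auto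
  next
    fix y assume "y \<in> H `` {\<one>\<^bsub>A\<^esub>}"
    then have "inv\<^bsub>A \<times>\<times> B\<^esub> (\<one>\<^bsub>A\<^esub>, y) \<in> H" using H.m_inv_closed by simp
    then show "inv\<^bsub>B\<^esub> y \<in> H `` {\<one>\<^bsub>A\<^esub>}"
      using carrier \<open>y \<in> H `` {\<one>\<^bsub>A\<^esub>}\<close> A.group_axioms B.group_axioms by simp
  next
    fix y y' assume "y \<in> H `` {\<one>\<^bsub>A\<^esub>}" "y' \<in> H `` {\<one>\<^bsub>A\<^esub>}"
    then show "y \<otimes>\<^bsub>B\<^esub> y' \<in> H `` {\<one>\<^bsub>A\<^esub>}" using H.m_closed by fastforce
  qed
qed

lemma subgroup_DirProd_Image_eq_rcos:
  assumes "group A" and "group B" and "subgroup H (A \<times>\<times> B)" and "(w, x) \<in> H"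
  shows "H `` {w} = H `` {\<one>\<^bsub>A\<^esub>} #>\<^bsub>B\<^esub> x"
proof -
  interpret A: group A by fact
  interpret B: group B by fact
  interpret AB: group "A \<times>\<times> B" using assms(1,2) by (rule DirProd_group)
  interpret H: subgroup H "A \<times>\<times> B" by fact
  interpret F: subgroup "H `` {\<one>\<^bsub>A\<^esub>}" B using subgroup_DirProd_Image_one assms(1-3) .
  have wx: "w \<in> carrier A" "x \<in> carrier B" using assms(4) H.subset by auto
  have "y \<in> H `` {w} \<longleftrightarrow> y \<in> H `` {\<one>\<^bsub>A\<^esub>} #>\<^bsub>B\<^esub> x" for y
  proof (cases "y \<in> carrier B")
    case True
    have "(w, y) \<in> H \<longleftrightarrow> (w, y) \<otimes>\<^bsub>A \<times>\<times> B\<^esub> inv\<^bsub>A \<times>\<times> B\<^esub> (w, x) \<in> H"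
      using H.rcos_module[OF AB.is_group, of "(w, x)" "(w, y)"] H.rcos_const[OF AB.is_group assms(4)]
        True wx by simp
    also have "(w, y) \<otimes>\<^bsub>A \<times>\<times> B\<^esub> inv\<^bsub>A \<times>\<times> B\<^esub> (w, x) = (\<one>\<^bsub>A\<^esub>, y \<otimes>\<^bsub>B\<^esub> inv\<^bsub>B\<^esub> x)"
      using wx assms(1,2) by simp
    also have "\<dots> \<in> H \<longleftrightarrow> y \<in> H `` {\<one>\<^bsub>A\<^esub>} #>\<^bsub>B\<^esub> x"
      using F.rcos_module[OF B.is_group wx(2) True] by simp
    finally show ?thesis by simp
  next
    case False
    then show ?thesis
      using H.subset F.elemrcos_carrier[OF B.is_group wx(2)] by auto
  qed
  then show ?thesis by blast
qed

lemma subgroup_DirProd_eq_coset_graph: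
  assumes "group A" and "group B" and "subgroup H (A \<times>\<times> B)" and "fst ` H = carrier A"
    and "H `` {\<one>\<^bsub>A\<^esub>} \<lhd> B"
  shows "(\<lambda>w. H `` {w}) \<in> hom A (B Mod H `` {\<one>\<^bsub>A\<^esub>})"
    and "H = coset_graph A B (H `` {\<one>\<^bsub>A\<^esub>}) (\<lambda>w. H `` {w})"
proof -
  interpret B: group B by fact
  interpret H: subgroup H "A \<times>\<times> B" by fact
  interpret N: normal "H `` {\<one>\<^bsub>A\<^esub>}" B by fact
  have fibre: "H `` {w} = H `` {\<one>\<^bsub>A\<^esub>} #>\<^bsub>B\<^esub> x" if "(w, x) \<in> H" for w x
    using subgroup_DirProd_Image_eq_rcos assms(1-3) that .
  have carrier: "w \<in> carrier A" "x \<in> carrier B" if "(w, x) \<in> H" for w x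
    using that H.subset by auto
  have "\<forall>w\<in>carrier A. \<exists>y. (w, y) \<in> H" using assms(4) by force
  then obtain x where x: "\<And>w. w \<in> carrier A \<Longrightarrow> (w, x w) \<in> H" by metis
  show "(\<lambda>w. H `` {w}) \<in> hom A (B Mod H `` {\<one>\<^bsub>A\<^esub>})"
  proof (rule homI)
    fix w assume "w \<in> carrier A"
    then have "H `` {w} = H `` {\<one>\<^bsub>A\<^esub>} #>\<^bsub>B\<^esub> x w" "x w \<in> carrier B"
      using fibre x carrier by blast+
    then show "H `` {w} \<in> carrier (B Mod H `` {\<one>\<^bsub>A\<^esub>})"
      unfolding carrier_FactGroup by blast
  next
    fix w w' assume w: "w \<in> carrier A" "w' \<in> carrier A"
    have "(w \<otimes>\<^bsub>A\<^esub> w', x w \<otimes>\<^bsub>B\<^esub> x w') \<in> H"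
      using H.m_closed[OF x x] w by simp
    then have "H `` {w \<otimes>\<^bsub>A\<^esub> w'} = H `` {\<one>\<^bsub>A\<^esub>} #>\<^bsub>B\<^esub> (x w \<otimes>\<^bsub>B\<^esub> x w')"
      using fibre by blast
    also have "\<dots> = (H `` {\<one>\<^bsub>A\<^esub>} #>\<^bsub>B\<^esub> x w) <#>\<^bsub>B\<^esub> (H `` {\<one>\<^bsub>A\<^esub>} #>\<^bsub>B\<^esub> x w')"
      using N.rcos_sum x carrier w by metis
    finally show "H `` {w \<otimes>\<^bsub>A\<^esub> w'} = H `` {w} \<otimes>\<^bsub>B Mod H `` {\<one>\<^bsub>A\<^esub>}\<^esub> H `` {w'}"
      using fibre[OF x[OF w(1)]] fibre[OF x[OF w(2)]] by simp
  qed
  have "(w, y) \<in> H \<longleftrightarrow> (w, y) \<in> coset_graph A B (H `` {\<one>\<^bsub>A\<^esub>}) (\<lambda>w. H `` {w})" for w y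
    using fibre carrier B.rcos_self[OF _ N.subgroup_axioms] by (auto simp: coset_graph_def)
  then show "H = coset_graph A B (H `` {\<one>\<^bsub>A\<^esub>}) (\<lambda>w. H `` {w})" by auto
qed

lemma topspace_G_top: "topspace (G_top p k) = carrier (G_grp p k)"
  by (simp add: G_top_def G_grp_def roots_grp_def)

lemma openin_G_top_singleton_iff:
  assumes "H \<subseteq> carrier (G_grp p k)" and "(w, c, t) \<in> H"
  shows "openin (subtopology (G_top p k) H) {(w, c, t)} \<longleftrightarrow> t isolated_in {t'. (w, c, t') \<in> H}"
proof
  have carrier: "w \<in> carrier (pruefer_grp p)" "c ^ k = 1" "t \<in> sphere 0 1"
    using assms by (auto simp: G_grp_def)
  assume "openin (subtopology (G_top p k) H) {(w, c, t)}"
  then obtain U where U: "openin (G_top p k) U" "{(w, c, t)} = U \<inter> H"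
    by (auto simp: openin_subtopology)
  have "continuous_map (top_of_set (sphere 0 1)) (G_top p k) (\<lambda>t'. (w, c, t'))"
    unfolding G_top_def using carrier
    by (intro continuous_map_pairedI continuous_map_id[unfolded id_def]) (auto simp: roots_grp_def)
  from openin_continuous_map_preimage[OF this U(1)]
  have "openin (top_of_set (sphere 0 1)) {t' \<in> sphere 0 1. (w, c, t') \<in> U}" by simp
  then obtain e where "e > 0" "ball t e \<inter> sphere 0 1 \<subseteq> {t' \<in> sphere 0 1. (w, c, t') \<in> U}"
    using carrier U(2) unfolding openin_contains_ball by blast
  then show "t isolated_in {t'. (w, c, t') \<in> H}"
    unfolding isolated_in_dist_Ex_iff using assms U(2) by (fastforce simp: G_grp_def)
next
  assume "t isolated_in {t'. (w, c, t') \<in> H}"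
  then obtain e where e: "e > 0" "\<And>t'. (w, c, t') \<in> H \<Longrightarrow> dist t t' < e \<Longrightarrow> t' = t"
    by (auto simp: isolated_in_dist_Ex_iff)
  let ?U = "{w} \<times> {c} \<times> (sphere 0 1 \<inter> ball t e)"
  have "openin (G_top p k) ?U"
    using assms unfolding G_top_def by (auto simp: openin_prod_Times_iff G_grp_def roots_grp_def)
  moreover have "{(w, c, t)} = ?U \<inter> H"
    using e assms by (auto simp: G_grp_def)
  ultimately show "openin (subtopology (G_top p k) H) {(w, c, t)}"
    by (auto simp: openin_subtopology)
qed

lemma discrete_subgroup_iff_isolated:
  "discrete_subgroup p k H \<longleftrightarrow>
     subgroup H (G_grp p k) \<and> (\<forall>w c t. (w, c, t) \<in> H \<longrightarrow> t isolated_in {t'. (w, c, t') \<in> H})"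
proof -
  have "subtopology (G_top p k) H = discrete_topology H \<longleftrightarrow>
          (\<forall>w c t. (w, c, t) \<in> H \<longrightarrow> t isolated_in {t'. (w, c, t') \<in> H})"
    if "H \<subseteq> carrier (G_grp p k)"
    unfolding eq_commute[of "subtopology _ _"] discrete_topology_unique
    using that openin_G_top_singleton_iff[OF that] by (auto simp: topspace_G_top)
  then show ?thesis
    unfolding discrete_subgroup_def using subgroup.subset by blast
qed

lemma H_Ff_eq_coset_graph: "H_Ff p k F f = coset_graph (pruefer_grp p) (K_grp k) F f"
  unfolding H_Ff_def coset_graph_def by blast

lemma H_Ff_infinite_discrete:
  assumes p: "Factorial_Ring.prime p" and k: "k > 0"
    and F: "finite F" "subgroup F (K_grp k)" and f: "f \<in> hom (pruefer_grp p) (K_grp k Mod F)"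
  shows "infinite (H_Ff p k F f)" and "discrete_subgroup p k (H_Ff p k F f)"
proof -
  interpret K: comm_group "K_grp k" using comm_group_K_grp k .
  have P: "group (pruefer_grp p)"
    using comm_group_pruefer_grp p prime_gt_0_nat comm_group.axioms(2) by blast
  show "infinite (H_Ff p k F f)"
    using fst_image_coset_graph[OF f] infinite_pruefer_grp[OF p]
    unfolding H_Ff_eq_coset_graph by (metis finite_imageI)
  have "subgroup (H_Ff p k F f) (G_grp p k)"
    unfolding H_Ff_eq_coset_graph G_grp_def
    using P K.subgroup_imp_normal[OF F(2)] f by (rule subgroup_coset_graph)
  moreover have "t isolated_in {t'. (w, c, t') \<in> H_Ff p k F f}" if "(w, c, t) \<in> H_Ff p k F f" for w c t
  proof -
    have "{t'. (w, c, t') \<in> H_Ff p k F f} \<subseteq> snd ` (H_Ff p k F f `` {w})" by force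
    also have "\<dots> = snd ` (F #>\<^bsub>K_grp k\<^esub> (c, t))"
      using coset_graph_Image[OF K.is_group F(2) that[unfolded H_Ff_eq_coset_graph]]
      unfolding H_Ff_eq_coset_graph by simp
    finally have "{t'. (w, c, t') \<in> H_Ff p k F f} \<subseteq> snd ` (F #>\<^bsub>K_grp k\<^esub> (c, t))" .
    moreover have "finite (F #>\<^bsub>K_grp k\<^esub> (c, t))" using F(1) by (simp add: r_coset_def)
    ultimately have "finite {t'. (w, c, t') \<in> H_Ff p k F f}" using finite_surj by blast
    then have "discrete {t'. (w, c, t') \<in> H_Ff p k F f}" using discrete_compact_finite_iff by blast
    then show ?thesis using that by (simp add: discreteD)
  qed
  ultimately show "discrete_subgroup p k (H_Ff p k F f)"
    using discrete_subgroup_iff_isolated by blast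
qed

lemma discrete_subgroup_finite_Image_one:
  assumes "p > 0" and "k > 0" and "discrete_subgroup p k H"
  shows "finite (H `` {1})"
proof -
  have H: "subgroup H (pruefer_grp p \<times>\<times> K_grp k)"
    and isolated: "\<And>w c t. (w, c, t) \<in> H \<Longrightarrow> t isolated_in {t'. (w, c, t') \<in> H}"
    using assms(3) unfolding discrete_subgroup_iff_isolated G_grp_def by blast+
  interpret K: comm_group "K_grp k" using comm_group_K_grp assms(2) .
  have "group (pruefer_grp p)" using comm_group_pruefer_grp assms(1) comm_group.axioms(2) by blast
  from subgroup_DirProd_Image_one[OF this K.is_group H]
  interpret F: subgroup "H `` {1}" "K_grp k" by simp
  have "(1, 1, 1) \<in> H" using F.one_closed by simp
  then have "1 isolated_in {t. (1, 1, t) \<in> H}" by (rule isolated)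
  then obtain e where e: "e > 0" "\<And>t. (1, 1, t) \<in> H \<Longrightarrow> dist 1 t < e \<Longrightarrow> t = 1"
    unfolding isolated_in_dist_Ex_iff mem_Collect_eq by blast
  have "uniform_discrete {t. (c, t) \<in> H `` {1}}" for c
  proof (rule uniformI1[OF e(1)])
    fix t1 t2 assume t: "t1 \<in> {t. (c, t) \<in> H `` {1}}" "t2 \<in> {t. (c, t) \<in> H `` {1}}" "dist t1 t2 < e"
    then have cK: "(c, t1) \<in> carrier (K_grp k)" "(c, t2) \<in> carrier (K_grp k)" using F.subset by auto
    then have c: "c \<noteq> 0" "norm t1 = 1" "norm t2 = 1" using assms(2) by (auto simp: power_0_left)
    have "(c, t2) \<otimes>\<^bsub>K_grp k\<^esub> inv\<^bsub>K_grp k\<^esub> (c, t1) \<in> H `` {1}"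
      using t F.m_closed F.m_inv_closed by simp
    then have in_H: "(1, 1, t2 / t1) \<in> H"
      using K_grp_inv[OF assms(2) cK(1)] c by (simp add: divide_inverse)
    have "t1 \<noteq> 0" using c(2) by auto
    then have "1 - t2 / t1 = (t1 - t2) / t1" by (simp add: diff_divide_distrib)
    then have "dist 1 (t2 / t1) = dist t1 t2" using c by (simp add: dist_norm norm_divide)
    then have "t2 / t1 = 1" using e(2)[OF in_H] t(3) by simp
    then show "t1 = t2" using \<open>t1 \<noteq> 0\<close> by simp
  qed
  moreover have "bounded {t. (c, t) \<in> H `` {1}}" for c
    by (rule bounded_subset[OF bounded_sphere[of 0 1]]) (use F.subset in auto)
  ultimately have "finite {t. (c, t) \<in> H `` {1}}" for c
    using uniform_discrete_finite_iff by blast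
  moreover have "finite {z::complex. z ^ k = 1}" using assms(2) by (intro finite_roots_unity) simp
  ultimately have "finite (\<Union>c\<in>{z::complex. z ^ k = 1}. Pair c ` {t. (c, t) \<in> H `` {1}})"
    by blast
  moreover have "H `` {1} \<subseteq> (\<Union>c\<in>{z::complex. z ^ k = 1}. Pair c ` {t. (c, t) \<in> H `` {1}})"
    using F.subset by auto
  ultimately show ?thesis using finite_subset by blast
qed

lemma infinite_discrete_subgroup_eq_H_Ff:
  assumes p: "Factorial_Ring.prime p" and k: "k > 0" and "infinite H" and "discrete_subgroup p k H"
  shows "\<exists>F f. finite F \<and> subgroup F (K_grp k) \<and> f \<in> hom (pruefer_grp p) (K_grp k Mod F)
           \<and> H = H_Ff p k F f"
proof -
  have p0: "p > 0" using p prime_gt_0_nat by blast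
  interpret P: comm_group "pruefer_grp p" using comm_group_pruefer_grp p0 .
  interpret K: comm_group "K_grp k" using comm_group_K_grp k .
  have H: "subgroup H (pruefer_grp p \<times>\<times> K_grp k)"
    using assms(4) by (simp add: discrete_subgroup_def G_grp_def)
  have F: "subgroup (H `` {1}) (K_grp k)"
    using subgroup_DirProd_Image_one[OF P.is_group K.is_group H] by simp
  have "fst ` H = carrier (pruefer_grp p)"
  proof (rule pruefer_infinite_subgroup_eq_carrier[OF p])
    have "group_hom (pruefer_grp p \<times>\<times> K_grp k) (pruefer_grp p) fst"
      using DirProd_group[OF P.is_group K.is_group] P.is_group
      by (auto simp: group_hom_def group_hom_axioms_def hom_def mult_DirProd')
    then show "subgroup (fst ` H) (pruefer_grp p)"
      using H by (rule group_hom.subgroup_img_is_subgroup)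
    have "finite (H `` {w})" for w
    proof (cases "\<exists>x. (w, x) \<in> H")
      case True
      then obtain x where "(w, x) \<in> H" by blast
      then have "H `` {w} = H `` {1} #>\<^bsub>K_grp k\<^esub> x"
        using subgroup_DirProd_Image_eq_rcos[OF P.is_group K.is_group H] by simp
      then show ?thesis
        using discrete_subgroup_finite_Image_one[OF p0 k assms(4)] by (simp add: r_coset_def)
    next
      case False
      then have "H `` {w} = {}" by auto
      then show ?thesis by simp
    qed
    moreover have "H \<subseteq> Sigma (fst ` H) (\<lambda>w. H `` {w})" by force
    ultimately show "infinite (fst ` H)" using assms(3) finite_subset by blast
  qed
  from subgroup_DirProd_eq_coset_graph[OF P.is_group K.is_group H this]
  have "(\<lambda>w. H `` {w}) \<in> hom (pruefer_grp p) (K_grp k Mod H `` {1})"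
    and "H = H_Ff p k (H `` {1}) (\<lambda>w. H `` {w})"
    using K.subgroup_imp_normal[OF F] by (simp_all add: H_Ff_eq_coset_graph)
  then show ?thesis
    using F discrete_subgroup_finite_Image_one[OF p0 k assms(4)] by blast
qed

theorem proposition6:
  fixes p k :: nat
  assumes "Factorial_Ring.prime p" and "k > 0"
  shows "(\<forall>F f. finite F \<and> subgroup F (K_grp k) \<and>
            f \<in> hom (pruefer_grp p) (K_grp k Mod F) \<longrightarrow>
              infinite (H_Ff p k F f) \<and> discrete_subgroup p k (H_Ff p k F f))
       \<and> (\<forall>H. infinite H \<and> discrete_subgroup p k H \<longrightarrow>
            (\<exists>F f. finite F \<and> subgroup F (K_grp k) \<and>
               f \<in> hom (pruefer_grp p) (K_grp k Mod F) \<and> H = H_Ff p k F f))"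
proof (rule conjI; intro allI impI; elim conjE)
  fix F f
  assume "finite F" "subgroup F (K_grp k)" "f \<in> hom (pruefer_grp p) (K_grp k Mod F)"
  from H_Ff_infinite_discrete[OF assms this]
  show "infinite (H_Ff p k F f) \<and> discrete_subgroup p k (H_Ff p k F f)" ..
next
  fix H assume "infinite H" "discrete_subgroup p k H"
  then show "\<exists>F f. finite F \<and> subgroup F (K_grp k) \<and>
               f \<in> hom (pruefer_grp p) (K_grp k Mod F) \<and> H = H_Ff p k F f"
    by (rule infinite_discrete_subgroup_eq_H_Ff[OF assms])
qed

end
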